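(* For all $n\ge 0$, the quadruples of statistics $(\operatorname{asc},\operatorname{des},\operatorname{MNA},\operatorname{MND})$ and $(\operatorname{des},\operatorname{asc},\operatorname{MND},\operatorname{MNA})$ are equidistributed on $S_n(231,312)$, i.e. $$\sum_{\pi\in S_n(231,312)} t_1^{\operatorname{asc}(\pi)}t_2^{\operatorname{des}(\pi)}t_3^{\operatorname{MNA}(\pi)}t_4^{\operatorname{MND}(\pi)}=\sum_{\pi\in S_n(231,312)} t_1^{\operatorname{des}(\pi)}t_2^{\operatorname{asc}(\pi)}t_3^{\operatorname{MND}(\pi)}t_4^{\operatorname{MNA}(\pi)}.$$
   Context: For $n\ge 0$, $S_n$ denotes the set of permutations $\pi=\pi_1\cdots\pi_n$ of $[n]=\{1,\dots,n\}$. $\pi$ avoids a pattern $\tau\in S_k$ if no subsequence $\pi_{i_1}\cdots\pi_{i_k}$ ($i_1<\dots<i_k$) satisfies $\pi_{i_a}<\pi_{i_b}\iff\tau_a<\tau_b$; $S_n(\tau,\rho)$ is the set of permutations in $S_n$ avoiding both $\tau$ and $\rho$. $\operatorname{asc}(\pi)$ (resp. $\operatorname{des}(\pi)$) is the number of $i\in[n-1]$ with $\pi_i<\pi_{i+1}$ (resp. $\pi_i>\pi_{i+1}$). $\operatorname{MNA}(\pi)$ is the maximum size of a set $I\subseteq[n-1]$ such that $\pi_i<\pi_{i+1}$ for all $i\in I$ and $|i-j|\ge 2$ for distinct $i,j\in I$; $\operatorname{MND}(\pi)$ is defined analogously with $\pi_i>\pi_{i+1}$. *)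

theory Defs
  imports "HOL-Combinatorics.Multiset_Permutations"
begin

text \<open>Permutations of [n] are represented as lists (one-line notation); list positions
are 0-based, so position i of the list corresponds to pi_(i+1).\<close>

definition Sn :: "nat \<Rightarrow> nat list set" where
  "Sn n = permutations_of_set {1..n}"

definition contains :: "nat list \<Rightarrow> nat list \<Rightarrow> bool" where
  "contains w tau \<longleftrightarrow> (\<exists>f::nat \<Rightarrow> nat.
      (\<forall>a b. a < b \<and> b < length tau \<longrightarrow> f a < f b) \<and>
      (\<forall>a < length tau. f a < length w) \<and>
      (\<forall>a < length tau. \<forall>b < length tau.
          (w ! f a < w ! f b \<longleftrightarrow> tau ! a < tau ! b)))"

definition avoids :: "nat list \<Rightarrow> nat list \<Rightarrow> bool" where
  "avoids w tau \<longleftrightarrow> \<not> contains w tau"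

definition Sn_av2 :: "nat \<Rightarrow> nat list \<Rightarrow> nat list \<Rightarrow> nat list set" where
  "Sn_av2 n tau rho = {w \<in> Sn n. avoids w tau \<and> avoids w rho}"

definition asc_set :: "nat list \<Rightarrow> nat set" where
  "asc_set w = {i. Suc i < length w \<and> w ! i < w ! Suc i}"

definition des_set :: "nat list \<Rightarrow> nat set" where
  "des_set w = {i. Suc i < length w \<and> w ! i > w ! Suc i}"

definition asc :: "nat list \<Rightarrow> nat" where
  "asc w = card (asc_set w)"

definition des :: "nat list \<Rightarrow> nat" where
  "des w = card (des_set w)"

definition max_nonadj :: "nat set \<Rightarrow> nat" where
  "max_nonadj S = Max {card I | I. I \<subseteq> S \<and> (\<forall>i\<in>I. \<forall>j\<in>I. i \<noteq> j \<longrightarrow> 2 \<le> (if i \<le> j then j - i else i - j))}"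

definition MNA :: "nat list \<Rightarrow> nat" where
  "MNA w = max_nonadj (asc_set w)"

definition MND :: "nat list \<Rightarrow> nat" where
  "MND w = max_nonadj (des_set w)"

end

theory Submission imports Defs begin

text \<open>A permutation avoids 231 and 312 exactly when it is layered, i.e. a concatenation of
decreasing runs of consecutive values, each run lying above the previous one. Then for
positions p < q the entry at p is smaller than the entry at q iff an ascent occurs between
them, so the permutation is determined by its ascent set, and every subset of the n - 1
possible ascent positions arises. Since the descent set is the complement of the ascent set,
complementation of subsets swaps (asc, des, MNA, MND) with (des, asc, MND, MNA).\<close>

lemma contains_231_iff:
  "contains w [2,3,1] \<longleftrightarrow>
     (\<exists>i j k. i < j \<and> j < k \<and> k < length w \<and> w ! k < w ! i \<and> w ! i < w ! j)"
proof
  assume "contains w [2,3,1]"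
  then obtain f where f: "\<forall>a b. a < b \<and> b < 3 \<longrightarrow> f a < f b" "\<forall>a < 3. f a < length w"
      "\<forall>a < 3. \<forall>b < 3. w ! f a < w ! f b \<longleftrightarrow> [2::nat,3,1] ! a < [2,3,1] ! b"
    unfolding contains_def by (simp add: numeral_3_eq_3) blast
  have "f 0 < f 1" "f 1 < f 2" "f 2 < length w" "w ! f 2 < w ! f 0" "w ! f 0 < w ! f 1"
    using f(1)[rule_format, of 0 1] f(1)[rule_format, of 1 2] f(2)[rule_format, of 2]
      f(3)[rule_format, of 2 0] f(3)[rule_format, of 0 1] by auto
  then show "\<exists>i j k. i < j \<and> j < k \<and> k < length w \<and> w ! k < w ! i \<and> w ! i < w ! j"
    by blast
next
  assume "\<exists>i j k. i < j \<and> j < k \<and> k < length w \<and> w ! k < w ! i \<and> w ! i < w ! j"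
  then obtain i j k where "i < j" "j < k" "k < length w" "w ! k < w ! i" "w ! i < w ! j"
    by blast
  then show "contains w [2,3,1]"
    unfolding contains_def
    by (intro exI[of _ "\<lambda>a. if a = 0 then i else if a = 1 then j else k"])
      (auto simp: less_Suc_eq numeral_3_eq_3 nth_Cons')
qed

lemma contains_312_iff:
  "contains w [3,1,2] \<longleftrightarrow>
     (\<exists>i j k. i < j \<and> j < k \<and> k < length w \<and> w ! j < w ! k \<and> w ! k < w ! i)"
proof
  assume "contains w [3,1,2]"
  then obtain f where f: "\<forall>a b. a < b \<and> b < 3 \<longrightarrow> f a < f b" "\<forall>a < 3. f a < length w"
      "\<forall>a < 3. \<forall>b < 3. w ! f a < w ! f b \<longleftrightarrow> [3::nat,1,2] ! a < [3,1,2] ! b"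
    unfolding contains_def by (simp add: numeral_3_eq_3) blast
  have "f 0 < f 1" "f 1 < f 2" "f 2 < length w" "w ! f 1 < w ! f 2" "w ! f 2 < w ! f 0"
    using f(1)[rule_format, of 0 1] f(1)[rule_format, of 1 2] f(2)[rule_format, of 2]
      f(3)[rule_format, of 1 2] f(3)[rule_format, of 2 0] by auto
  then show "\<exists>i j k. i < j \<and> j < k \<and> k < length w \<and> w ! j < w ! k \<and> w ! k < w ! i"
    by blast
next
  assume "\<exists>i j k. i < j \<and> j < k \<and> k < length w \<and> w ! j < w ! k \<and> w ! k < w ! i"
  then obtain i j k where "i < j" "j < k" "k < length w" "w ! j < w ! k" "w ! k < w ! i"
    by blast
  then show "contains w [3,1,2]"
    unfolding contains_def
    by (intro exI[of _ "\<lambda>a. if a = 0 then i else if a = 1 then j else k"])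
      (auto simp: less_Suc_eq numeral_3_eq_3 nth_Cons')
qed

lemma Sn_iff: "w \<in> Sn n \<longleftrightarrow> distinct w \<and> set w = {1..n}"
  by (auto simp: Sn_def permutations_of_set_def)

lemma length_Sn: "w \<in> Sn n \<Longrightarrow> length w = n"
  by (metis Sn_iff card_atLeastAtMost diff_Suc_1 distinct_card)

lemma des_set_eq_complement_asc_set:
  assumes "distinct w"
  shows "des_set w = {0..<length w - 1} - asc_set w"
proof -
  have "w ! i \<noteq> w ! Suc i" if "Suc i < length w" for i
    using assms that by (simp add: nth_eq_iff_index_eq)
  then show ?thesis
    unfolding des_set_def asc_set_def by (auto simp: less_diff_conv) (meson linorder_neqE_nat)
qed

lemma asc_set_subset: "asc_set w \<subseteq> {0..<length w - 1}"
  by (auto simp: asc_set_def)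

definition order_rank :: "(nat \<Rightarrow> nat \<Rightarrow> bool) \<Rightarrow> nat \<Rightarrow> nat \<Rightarrow> nat" where
  "order_rank R n i = card {p. p < n \<and> (R p i \<or> p = i)}"

lemma order_rank_less:
  assumes "transp R" "irreflp R" "q < n" "R p q"
  shows "order_rank R n p < order_rank R n q"
  unfolding order_rank_def
proof (rule psubset_card_mono)
  have "\<not> R q p" "q \<noteq> p"
    using assms by (metis irreflpD transpD)+
  then show "{p'. p' < n \<and> (R p' p \<or> p' = p)} \<subset> {p'. p' < n \<and> (R p' q \<or> p' = q)}"
    using assms by (auto dest: transpD)
qed simp

lemma order_rank_less_iff:
  assumes "transp R" "irreflp R" "totalp R" "p < n" "q < n"
  shows "order_rank R n p < order_rank R n q \<longleftrightarrow> R p q"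
  using order_rank_less[OF assms(1,2)] assms(3-5)
  by (metis less_not_sym not_less_iff_gr_or_eq totalpD)

lemma order_rank_bounds:
  assumes "i < n"
  shows "order_rank R n i \<in> {1..n}"
proof -
  have "order_rank R n i \<le> card {..<n}"
    unfolding order_rank_def by (rule card_mono) auto
  moreover have "order_rank R n i > 0"
    unfolding order_rank_def using assms by (subst card_gt_0_iff) auto
  ultimately show ?thesis by simp
qed

lemma map_order_rank_in_Sn:
  assumes "transp R" "irreflp R" "totalp R"
  shows "map (order_rank R n) [0..<n] \<in> Sn n"
proof -
  have "inj_on (order_rank R n) {..<n}"
    using order_rank_less_iff[OF assms] assms(3)
    by (intro inj_onI) (metis lessThan_iff less_irrefl totalpD)
  then have distinct: "distinct (map (order_rank R n) [0..<n])"
    by (simp add: distinct_map atLeast0LessThan)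
  moreover have "set (map (order_rank R n) [0..<n]) \<subseteq> {1..n}"
    using order_rank_bounds by auto
  ultimately have "set (map (order_rank R n) [0..<n]) = {1..n}"
    by (metis card_atLeastAtMost card_subset_eq diff_Suc_1 distinct_card finite_atLeastAtMost
        length_map length_upt minus_nat.diff_0)
  with distinct show ?thesis by (simp add: Sn_iff)
qed

lemma Sn_nth_eq_order_rank:
  assumes "w \<in> Sn n" "i < n"
  shows "w ! i = order_rank (\<lambda>p q. w ! p < w ! q) n i"
proof -
  have set: "set w = {1..n}" and distinct: "distinct w" and length: "length w = n"
    using assms(1) by (auto simp: Sn_iff length_Sn)
  let ?P = "{p. p < n \<and> (w ! p < w ! i \<or> p = i)}"
  have "(!) w ` ?P = {1..w ! i}"
  proof
    show "(!) w ` ?P \<subseteq> {1..w ! i}"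
      using set length by (auto simp: set_conv_nth)
    show "{1..w ! i} \<subseteq> (!) w ` ?P"
    proof
      fix x assume x: "x \<in> {1..w ! i}"
      have "w ! i \<in> {1..n}"
        using set length assms(2) nth_mem by blast
      with x set have "x \<in> set w" by auto
      then obtain p where p: "p < n" "w ! p = x"
        using length by (auto simp: in_set_conv_nth)
      with x distinct length assms(2) have "w ! p < w ! i \<or> p = i"
        by (auto simp: nth_eq_iff_index_eq le_less)
      with p show "x \<in> (!) w ` ?P" by blast
    qed
  qed
  moreover have "inj_on ((!) w) ?P"
    using distinct length by (auto simp: inj_on_def nth_eq_iff_index_eq)
  ultimately show ?thesis
    unfolding order_rank_def using card_image by fastforce
qed

subsection \<open>Layered permutations\<close>

text \<open>The order that a layered permutation with ascent set A induces on positions.\<close>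

definition layered_less :: "nat set \<Rightarrow> nat \<Rightarrow> nat \<Rightarrow> bool" where
  "layered_less A p q \<longleftrightarrow> p < q \<and> A \<inter> {p..<q} \<noteq> {} \<or> q < p \<and> A \<inter> {q..<p} = {}"

lemma layered_less_transp: "transp (layered_less A)"
proof
  fix p q r assume "layered_less A p q" "layered_less A q r"
  then show "layered_less A p r"
    unfolding layered_less_def disjoint_iff atLeastLessThan_iff
    by (cases "p < r"; cases "p = r") (force, force, force, (meson le_trans less_trans not_le)+)
qed

lemma layered_less_irreflp: "irreflp (layered_less A)"
  by (simp add: irreflp_def layered_less_def)

lemma layered_less_totalp: "totalp (layered_less A)"
  by (auto simp: totalp_on_def layered_less_def)

definition layered_perm :: "nat \<Rightarrow> nat set \<Rightarrow> nat list" where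
  "layered_perm n A = map (order_rank (layered_less A) n) [0..<n]"

lemma layered_perm_in_Sn: "layered_perm n A \<in> Sn n"
  unfolding layered_perm_def
  using map_order_rank_in_Sn layered_less_transp layered_less_irreflp layered_less_totalp .

lemma length_layered_perm [simp]: "length (layered_perm n A) = n"
  by (simp add: layered_perm_def)

lemma layered_perm_less_iff:
  assumes "p < n" "q < n"
  shows "layered_perm n A ! p < layered_perm n A ! q \<longleftrightarrow> layered_less A p q"
  using order_rank_less_iff[OF layered_less_transp layered_less_irreflp layered_less_totalp assms]
    assms by (simp add: layered_perm_def)

lemma layered_perm_in_Sn_av2: "layered_perm n A \<in> Sn_av2 n [2,3,1] [3,1,2]"
proof -
  have "\<not> contains (layered_perm n A) [2,3,1]"
  proof
    assume "contains (layered_perm n A) [2,3,1]"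
    then obtain i j k where "i < j" "j < k" "k < n"
      "layered_less A k i" "layered_less A i j"
      unfolding contains_231_iff by (auto simp: layered_perm_less_iff)
    then show False
      unfolding layered_less_def by auto
  qed
  moreover have "\<not> contains (layered_perm n A) [3,1,2]"
  proof
    assume "contains (layered_perm n A) [3,1,2]"
    then obtain i j k where "i < j" "j < k" "k < n"
      "layered_less A j k" "layered_less A k i"
      unfolding contains_312_iff by (auto simp: layered_perm_less_iff)
    then show False
      unfolding layered_less_def by auto
  qed
  ultimately show ?thesis
    using layered_perm_in_Sn by (simp add: Sn_av2_def avoids_def)
qed

lemma asc_set_layered_perm:
  assumes "A \<subseteq> {0..<n - 1}"
  shows "asc_set (layered_perm n A) = A"
proof -
  have "layered_less A i (Suc i) \<longleftrightarrow> i \<in> A" for i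
    by (simp add: layered_less_def atLeastLessThanSuc_atLeastAtMost)
  then have "i \<in> asc_set (layered_perm n A) \<longleftrightarrow> Suc i < n \<and> i \<in> A" for i
    unfolding asc_set_def using layered_perm_less_iff[of i n "Suc i" A] by auto
  then show ?thesis
    using assms by auto
qed

subsection \<open>Avoiders of 231 and 312 are layered\<close>

lemma descending_chain_less:
  fixes f :: "nat \<Rightarrow> 'a :: order"
  assumes "\<And>j. p \<le> j \<Longrightarrow> j < q \<Longrightarrow> f (Suc j) < f j" "p < q"
  shows "f q < f p"
  using Suc_leI[OF assms(2)]
proof (induction rule: dec_induct)
  case base
  show ?case using assms by simp
next
  case (step k)
  then show ?case using assms(1)[of k] by simp
qed

lemma avoider_less_if_ascent_between:
  assumes "distinct w" "\<not> contains w [2,3,1]" "\<not> contains w [3,1,2]"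
    and "j \<in> asc_set w" "p \<le> j" "j < q" "q < length w"
  shows "w ! p < w ! q"
proof (rule ccontr)
  have neq: "w ! a \<noteq> w ! b" if "a < length w" "b < length w" "a \<noteq> b" for a b
    using assms(1) that by (simp add: nth_eq_iff_index_eq)
  have j: "Suc j < length w" "w ! j < w ! Suc j"
    using assms(4) by (auto simp: asc_set_def)
  assume "\<not> w ! p < w ! q"
  with neq[of p q] assms(5-7) have qp: "w ! q < w ! p"
    by simp
  show False
  proof (cases "w ! q < w ! j")
    case True
    with j assms(6) have "Suc j < q"
      by (metis Suc_lessI less_asym)
    \<comment> \<open>then j, j + 1, q form a 231\<close>
    with True j assms(7) have "contains w [2,3,1]"
      unfolding contains_231_iff by blast
    with assms(2) show False ..
  next
    case False
    with qp neq[of q j] j assms(5-7) have pj: "p < j" "w ! j < w ! q"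
      by (auto simp: le_less)
    show False
    proof (cases "w ! Suc j < w ! p")
      case True
      \<comment> \<open>then p, j, j + 1 form a 312\<close>
      with pj j have "contains w [3,1,2]"
        unfolding contains_312_iff by blast
      with assms(3) show False ..
    next
      case False
      with neq[of p "Suc j"] pj j have pSj: "w ! p < w ! Suc j"
        by simp
      with qp assms(6) have "Suc j < q"
        by (metis Suc_lessI less_asym)
      \<comment> \<open>then p, j + 1, q form a 231\<close>
      with pSj qp less_SucI[OF pj(1)] assms(7) have "contains w [2,3,1]"
        unfolding contains_231_iff by blast
      with assms(2) show False ..
    qed
  qed
qed

lemma avoider_less_iff_layered_less:
  assumes "distinct w" "\<not> contains w [2,3,1]" "\<not> contains w [3,1,2]"
    and "p < length w" "q < length w"
  shows "w ! p < w ! q \<longleftrightarrow> layered_less (asc_set w) p q"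
proof -
  have less_iff_ascent_between: "w ! p < w ! q \<longleftrightarrow> asc_set w \<inter> {p..<q} \<noteq> {}"
    if "p < q" "q < length w" for p q
  proof
    assume "asc_set w \<inter> {p..<q} \<noteq> {}"
    then show "w ! p < w ! q"
      using avoider_less_if_ascent_between[OF assms(1-3)] that by auto
  next
    assume "w ! p < w ! q"
    moreover have "w ! q < w ! p" if "asc_set w \<inter> {p..<q} = {}"
    proof (rule descending_chain_less[of p q "(!) w"])
      fix j assume "p \<le> j" "j < q"
      with that \<open>q < length w\<close> have "Suc j < length w" "j \<notin> asc_set w" by auto
      moreover from assms(1) \<open>Suc j < length w\<close> have "w ! Suc j \<noteq> w ! j"
        by (simp add: nth_eq_iff_index_eq)
      ultimately show "w ! Suc j < w ! j"
        by (auto simp: asc_set_def)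
    qed fact
    ultimately show "asc_set w \<inter> {p..<q} \<noteq> {}" by auto
  qed
  consider "p < q" | "p = q" | "q < p" by arith
  then show ?thesis
  proof cases
    case 1
    then show ?thesis using less_iff_ascent_between assms(5) by (simp add: layered_less_def)
  next
    case 2
    then show ?thesis by (simp add: layered_less_def)
  next
    case 3
    have "w ! p \<noteq> w ! q"
      using 3 assms by (simp add: nth_eq_iff_index_eq)
    then show ?thesis
      using 3 less_iff_ascent_between[of q p] assms(4) by (auto simp: layered_less_def)
  qed
qed

lemma layered_perm_asc_set:
  assumes "w \<in> Sn_av2 n [2,3,1] [3,1,2]"
  shows "layered_perm n (asc_set w) = w"
proof -
  have w: "w \<in> Sn n" "\<not> contains w [2,3,1]" "\<not> contains w [3,1,2]"
    using assms by (auto simp: Sn_av2_def avoids_def)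
  have length: "length w = n" and distinct: "distinct w"
    using w(1) by (auto simp: length_Sn Sn_iff)
  have "order_rank (layered_less (asc_set w)) n i = w ! i" if "i < n" for i
  proof -
    have "order_rank (layered_less (asc_set w)) n i = order_rank (\<lambda>p q. w ! p < w ! q) n i"
      unfolding order_rank_def
      using avoider_less_iff_layered_less[OF distinct w(2,3)] length that
      by (intro arg_cong[where f = card] Collect_cong) auto
    also have "\<dots> = w ! i"
      using Sn_nth_eq_order_rank[OF w(1) that] by simp
    finally show ?thesis .
  qed
  then show ?thesis
    using length by (intro nth_equalityI) (auto simp: layered_perm_def)
qed

lemma bij_betw_asc_set_Pow:
  "bij_betw asc_set (Sn_av2 n [2,3,1] [3,1,2]) (Pow {0..<n - 1})"
proof (rule bij_betw_byWitness[where f' = "layered_perm n"])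
  show "\<forall>w \<in> Sn_av2 n [2,3,1] [3,1,2]. layered_perm n (asc_set w) = w"
    using layered_perm_asc_set by blast
  show "\<forall>A \<in> Pow {0..<n - 1}. asc_set (layered_perm n A) = A"
    using asc_set_layered_perm by blast
  show "asc_set ` Sn_av2 n [2,3,1] [3,1,2] \<subseteq> Pow {0..<n - 1}"
  proof (intro image_subsetI PowI)
    fix w assume "w \<in> Sn_av2 n [2,3,1] [3,1,2]"
    then have "length w = n"
      by (simp add: Sn_av2_def length_Sn)
    then show "asc_set w \<subseteq> {0..<n - 1}"
      using asc_set_subset by metis
  qed
  show "layered_perm n ` Pow {0..<n - 1} \<subseteq> Sn_av2 n [2,3,1] [3,1,2]"
    using layered_perm_in_Sn_av2 by blast
qed

lemma sum_bij_betw_Pow_swap_complement: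
  assumes "bij_betw f S (Pow U)"
  shows "(\<Sum>x\<in>S. h (f x) (U - f x)) = (\<Sum>x\<in>S. h (U - f x) (f x))"
proof -
  have complement: "bij_betw (\<lambda>A. U - A) (Pow U) (Pow U)"
    by (rule bij_betw_byWitness[where f' = "\<lambda>A. U - A"]) auto
  have "(\<Sum>x\<in>S. h (f x) (U - f x)) = (\<Sum>A\<in>Pow U. h A (U - A))"
    using sum.reindex_bij_betw[OF assms, of "\<lambda>A. h A (U - A)"] .
  also have "\<dots> = (\<Sum>A\<in>Pow U. h (U - A) (U - (U - A)))"
    using sum.reindex_bij_betw[OF complement, of "\<lambda>A. h A (U - A)"] by simp
  also have "\<dots> = (\<Sum>A\<in>Pow U. h (U - A) A)"
    by (intro sum.cong) (auto simp: double_diff)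
  also have "\<dots> = (\<Sum>x\<in>S. h (U - f x) (f x))"
    using sum.reindex_bij_betw[OF assms, of "\<lambda>A. h (U - A) A"] by simp
  finally show ?thesis .
qed

theorem theorem12:
  fixes t1 t2 t3 t4 :: "'a :: comm_semiring_1" and n :: nat
  shows "(\<Sum>w\<in>Sn_av2 n [2,3,1] [3,1,2].
            t1 ^ asc w * t2 ^ des w * t3 ^ MNA w * t4 ^ MND w)
       = (\<Sum>w\<in>Sn_av2 n [2,3,1] [3,1,2].
            t1 ^ des w * t2 ^ asc w * t3 ^ MND w * t4 ^ MNA w)"
proof -
  let ?S = "Sn_av2 n [2,3,1] [3,1,2]" and ?U = "{0..<n - 1}"
  define h where "h A D = t1 ^ card A * t2 ^ card D * t3 ^ max_nonadj A * t4 ^ max_nonadj D"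
    for A D :: "nat set"
  have des_set: "des_set w = ?U - asc_set w" if "w \<in> ?S" for w
  proof -
    from that have "distinct w" "length w = n"
      by (auto simp: Sn_av2_def Sn_iff length_Sn)
    then show ?thesis
      by (simp add: des_set_eq_complement_asc_set)
  qed
  have "(\<Sum>w\<in>?S. t1 ^ asc w * t2 ^ des w * t3 ^ MNA w * t4 ^ MND w)
      = (\<Sum>w\<in>?S. h (asc_set w) (?U - asc_set w))"
    by (intro sum.cong) (simp_all add: h_def asc_def des_def MNA_def MND_def des_set)
  also have "\<dots> = (\<Sum>w\<in>?S. h (?U - asc_set w) (asc_set w))"
    using bij_betw_asc_set_Pow by (rule sum_bij_betw_Pow_swap_complement)
  also have "\<dots> = (\<Sum>w\<in>?S. t1 ^ des w * t2 ^ asc w * t3 ^ MND w * t4 ^ MNA w)"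
    by (intro sum.cong) (simp_all add: h_def asc_def des_def MNA_def MND_def des_set)
  finally show ?thesis .
qed

end
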